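(* Let $\mathbb{K}$ be a field, $\theta=(\{X_t\}_{t\in G},\{h_t\}_{t\in G})$ a free partial action of a group $G$ on a set $X$, $R=\{(x,h_t(x)): t\in G,\ x\in X_{t^{-1}}\}$, and $\mathcal{F}_0(R)$ the algebra of finitely supported functions $R\to\mathbb{K}$ with pointwise linear operations and product $(f*g)(x,h_t(x))=\sum_{s\in G,\ x\in X_{s^{-1}}} f(x,h_s(x))\,g(h_s(x),h_t(x))$. If $I$ is a (two-sided) ideal of $\mathcal{F}_0(R)$, then there exists an $R$-invariant subset $Z\subseteq X$ such that $I=\mathcal{F}_0((Z\times Z)\cap R)$, the set of $f\in\mathcal{F}_0(R)$ vanishing outside $(Z\times Z)\cap R$.
   Context: A partial action of $G$ on a set $X$: subsets $X_t$, bijections $h_t:X_{t^{-1}}\to X_t$, $X_e=X$, $h_e=\mathrm{id}$, $h_t(X_{t^{-1}}\cap X_s)=X_t\cap X_{ts}$, $h_th_s=h_{ts}$ on $X_{s^{-1}}\cap X_{s^{-1}t^{-1}}$; free means $h_t(x)=x$ implies $t=e$. A subset $Z\subseteq X$ is $R$-invariant if whenever $(z,x)\in R$ with $z\in Z$, then $x\in Z$. *)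

theory Defs
  imports Main
begin

text \<open>A group G is rendered as a type of class group_add (written additively:
 0 is the identity, - t the inverse, t + s the product ts).
 A partial action of G on the set X: domains Xd t, maps h t.\<close>

definition partial_action ::
  "'x set \<Rightarrow> ('g::group_add \<Rightarrow> 'x set) \<Rightarrow> ('g \<Rightarrow> 'x \<Rightarrow> 'x) \<Rightarrow> bool" where
  "partial_action X Xd h \<longleftrightarrow>
     (\<forall>t. Xd t \<subseteq> X) \<and>
     (\<forall>t. bij_betw (h t) (Xd (- t)) (Xd t)) \<and>
     Xd 0 = X \<and> (\<forall>x\<in>X. h 0 x = x) \<and>
     (\<forall>t s. h t ` (Xd (- t) \<inter> Xd s) = Xd t \<inter> Xd (t + s)) \<and>
     (\<forall>t s. \<forall>x \<in> Xd (- s) \<inter> Xd (- s + - t). h t (h s x) = h (t + s) x)"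

definition free_partial_action ::
  "'x set \<Rightarrow> ('g::group_add \<Rightarrow> 'x set) \<Rightarrow> ('g \<Rightarrow> 'x \<Rightarrow> 'x) \<Rightarrow> bool" where
  "free_partial_action X Xd h \<longleftrightarrow> partial_action X Xd h \<and>
     (\<forall>t x. x \<in> Xd (- t) \<and> h t x = x \<longrightarrow> t = 0)"

definition orbit_rel :: "('g::group_add \<Rightarrow> 'x set) \<Rightarrow> ('g \<Rightarrow> 'x \<Rightarrow> 'x) \<Rightarrow> ('x \<times> 'x) set" where
  "orbit_rel Xd h = {(x, h t x) | t x. x \<in> Xd (- t)}"

definition F0 :: "('x \<times> 'x) set \<Rightarrow> ('x \<times> 'x \<Rightarrow> 'k::field) set" where
  "F0 S = {f. finite {p. f p \<noteq> 0} \<and> (\<forall>p. p \<notin> S \<longrightarrow> f p = 0)}"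

text \<open>Convolution product on F0(R):
  (f * g)(x, y) = sum over s with x in X_{s^{-1}} of f(x, h_s x) g(h_s x, y) for (x,y) in R
  (only finitely many nonzero terms; the sum is taken over those s with f(x,h_s x) nonzero),
  and 0 outside R.\<close>
definition conv ::
  "('g::group_add \<Rightarrow> 'x set) \<Rightarrow> ('g \<Rightarrow> 'x \<Rightarrow> 'x) \<Rightarrow>
   ('x \<times> 'x \<Rightarrow> 'k::field) \<Rightarrow> ('x \<times> 'x \<Rightarrow> 'k) \<Rightarrow> ('x \<times> 'x \<Rightarrow> 'k)" where
  "conv Xd h f g = (\<lambda>(x, y). if (x, y) \<in> orbit_rel Xd h then
      (\<Sum>s \<in> {s. x \<in> Xd (- s) \<and> f (x, h s x) \<noteq> 0}. f (x, h s x) * g (h s x, y))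
    else 0)"

definition is_ideal ::
  "('g::group_add \<Rightarrow> 'x set) \<Rightarrow> ('g \<Rightarrow> 'x \<Rightarrow> 'x) \<Rightarrow> ('x \<times> 'x \<Rightarrow> 'k::field) set \<Rightarrow> bool" where
  "is_ideal Xd h I \<longleftrightarrow>
     I \<subseteq> F0 (orbit_rel Xd h) \<and> (\<lambda>_. 0) \<in> I \<and>
     (\<forall>f\<in>I. \<forall>g\<in>I. (\<lambda>p. f p + g p) \<in> I) \<and>
     (\<forall>c. \<forall>f\<in>I. (\<lambda>p. c * f p) \<in> I) \<and>
     (\<forall>f\<in>F0 (orbit_rel Xd h). \<forall>g\<in>I. conv Xd h f g \<in> I \<and> conv Xd h g f \<in> I)"

definition R_invariant :: "('x \<times> 'x) set \<Rightarrow> 'x set \<Rightarrow> bool" where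
  "R_invariant R Z \<longleftrightarrow> (\<forall>z x. (z, x) \<in> R \<and> z \<in> Z \<longrightarrow> x \<in> Z)"

end

theory Submission imports Defs begin

text \<open>Freeness makes R a principal groupoid: for (a, b) in R there is exactly one t with
  b = h t a, so the matrix units e(a,b) (indicators of single pairs of R) multiply like the
  matrix units of an R-indexed matrix ring. For an ideal I put Z = {x. e(x,x) \<in> I}.
  The sandwich identity e(a,x) * f * e(y,b) = f(x,y) e(a,b) shows that every pair (x, y) in
  the support of some f \<in> I lies in Z \<times> Z, and that e(x,y) \<in> I whenever x \<in> Z and
  (x, y) \<in> R; the latter gives R-invariance of Z and, since finitely supported functions are
  finite linear combinations of matrix units, the inclusion F0((Z \<times> Z) \<inter> R) \<subseteq> I.\<close>

lemma partial_actionD: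
  assumes "partial_action X Xd h"
  shows partial_action_dom_subset: "Xd t \<subseteq> X"
    and partial_action_bij: "bij_betw (h t) (Xd (- t)) (Xd t)"
    and partial_action_dom_zero: "Xd 0 = X"
    and partial_action_zero: "x \<in> X \<Longrightarrow> h 0 x = x"
    and partial_action_image: "h t ` (Xd (- t) \<inter> Xd s) = Xd t \<inter> Xd (t + s)"
    and partial_action_comp:
      "x \<in> Xd (- s) \<Longrightarrow> x \<in> Xd (- s + - t) \<Longrightarrow> h t (h s x) = h (t + s) x"
  using assms unfolding partial_action_def by simp_all

lemma partial_action_maps_to:
  assumes "partial_action X Xd h" "x \<in> Xd (- t)"
  shows "h t x \<in> Xd t"
  using partial_action_bij[OF assms(1), of t] assms(2) by (auto simp: bij_betw_def)

lemma partial_action_inverse: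
  assumes pa: "partial_action X Xd h" and x: "x \<in> Xd (- t)"
  shows "h (- t) (h t x) = x"
proof -
  have xX: "x \<in> X" using partial_action_dom_subset[OF pa] x by blast
  then have "x \<in> Xd (- t + - (- t))" using partial_action_dom_zero[OF pa] by simp
  then have "h (- t) (h t x) = h (- t + t) x" using partial_action_comp[OF pa x] by blast
  also have "\<dots> = x" using partial_action_zero[OF pa xX] by simp
  finally show ?thesis .
qed

lemma partial_action_comp_dom:
  assumes pa: "partial_action X Xd h" and x: "x \<in> Xd (- s)" and hx: "h s x \<in> Xd (- t)"
  shows "x \<in> Xd (- s + - t)"
proof -
  have "h s x \<in> Xd (- (- s)) \<inter> Xd (- t)" using partial_action_maps_to[OF pa x] hx by simp
  then have "h (- s) (h s x) \<in> Xd (- s) \<inter> Xd (- s + - t)"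
    using partial_action_image[OF pa, of "- s" "- t"] by blast
  then show ?thesis using partial_action_inverse[OF pa x] by simp
qed

lemma free_partial_action_partial_action:
  "free_partial_action X Xd h \<Longrightarrow> partial_action X Xd h"
  unfolding free_partial_action_def by blast

lemma free_partial_action_unique:
  assumes free: "free_partial_action X Xd h"
    and s: "a \<in> Xd (- s)" and t: "a \<in> Xd (- t)" and eq: "h s a = h t a"
  shows "s = t"
proof -
  have pa: "partial_action X Xd h" using free by (rule free_partial_action_partial_action)
  have "h s a \<in> Xd (- (- t))" using partial_action_maps_to[OF pa t] eq by simp
  then have dom: "a \<in> Xd (- s + - (- t))" using partial_action_comp_dom[OF pa s] by blast
  have "h (- t + s) a = h (- t) (h s a)" using partial_action_comp[OF pa s dom] by simp
  also have "\<dots> = a" using partial_action_inverse[OF pa t] eq by simp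
  finally have "h (- t + s) a = a" .
  moreover have "a \<in> Xd (- (- t + s))" using dom by (simp add: minus_add)
  ultimately have "- t + s = 0" using free unfolding free_partial_action_def by blast
  then show ?thesis by (metis add_minus_cancel add.right_neutral)
qed

lemma orbit_rel_iff: "(x, y) \<in> orbit_rel Xd h \<longleftrightarrow> (\<exists>t. x \<in> Xd (- t) \<and> y = h t x)"
  unfolding orbit_rel_def by blast

lemma orbit_rel_fst_mem:
  assumes "partial_action X Xd h" "(x, y) \<in> orbit_rel Xd h"
  shows "x \<in> X"
  using assms partial_action_dom_subset unfolding orbit_rel_iff by blast

lemma orbit_rel_refl:
  assumes pa: "partial_action X Xd h" and x: "x \<in> X"
  shows "(x, x) \<in> orbit_rel Xd h"
  unfolding orbit_rel_iff
  using partial_action_dom_zero[OF pa] partial_action_zero[OF pa x] x by (metis minus_zero)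

lemma orbit_rel_sym:
  assumes pa: "partial_action X Xd h" and "(x, y) \<in> orbit_rel Xd h"
  shows "(y, x) \<in> orbit_rel Xd h"
proof -
  obtain t where t: "x \<in> Xd (- t)" "y = h t x" using assms(2) unfolding orbit_rel_iff by blast
  have "y \<in> Xd (- (- t))" using partial_action_maps_to[OF pa t(1)] t(2) by simp
  moreover have "x = h (- t) y" using partial_action_inverse[OF pa t(1)] t(2) by simp
  ultimately show ?thesis unfolding orbit_rel_iff by blast
qed

lemma orbit_rel_trans:
  assumes pa: "partial_action X Xd h"
    and "(x, y) \<in> orbit_rel Xd h" and "(y, z) \<in> orbit_rel Xd h"
  shows "(x, z) \<in> orbit_rel Xd h"
proof -
  obtain s where s: "x \<in> Xd (- s)" "y = h s x" using assms(2) unfolding orbit_rel_iff by blast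
  obtain t where t: "y \<in> Xd (- t)" "z = h t y" using assms(3) unfolding orbit_rel_iff by blast
  have dom: "x \<in> Xd (- s + - t)" using partial_action_comp_dom[OF pa s(1)] s(2) t(1) by blast
  then have "z = h (t + s) x" using partial_action_comp[OF pa s(1)] s(2) t(2) by simp
  moreover have "x \<in> Xd (- (t + s))" using dom by (simp add: minus_add)
  ultimately show ?thesis unfolding orbit_rel_iff by blast
qed

definition matrix_unit :: "'x \<Rightarrow> 'x \<Rightarrow> ('x \<times> 'x \<Rightarrow> 'k::zero_neq_one)" where
  "matrix_unit a b = (\<lambda>p. if p = (a, b) then 1 else 0)"

lemma matrix_unit_F0: "(a, b) \<in> S \<Longrightarrow> (matrix_unit a b :: 'x \<times> 'x \<Rightarrow> 'k::field) \<in> F0 S"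
proof -
  assume "(a, b) \<in> S"
  moreover have "{p. matrix_unit a b p \<noteq> (0::'k)} \<subseteq> {(a, b)}"
    unfolding matrix_unit_def by auto
  ultimately show ?thesis unfolding F0_def matrix_unit_def by (auto intro: finite_subset)
qed

lemma sum_matrix_units_eq:
  fixes f :: "'x \<times> 'x \<Rightarrow> 'k::field"
  assumes "finite {p. f p \<noteq> 0}"
  shows "(\<lambda>q. \<Sum>p\<in>{p. f p \<noteq> 0}. f p * matrix_unit (fst p) (snd p) q) = f"
proof
  fix q
  have "(\<Sum>p\<in>{p. f p \<noteq> 0}. f p * matrix_unit (fst p) (snd p) q) =
      (\<Sum>p\<in>{p. f p \<noteq> 0}. if q = p then f p else 0)"
    by (intro sum.cong) (auto simp: matrix_unit_def)
  also have "\<dots> = f q" using assms by (simp add: sum.delta)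
  finally show "(\<Sum>p\<in>{p. f p \<noteq> 0}. f p * matrix_unit (fst p) (snd p) q) = f q" .
qed

lemma conv_matrix_unit_left:
  fixes g :: "'x \<times> 'x \<Rightarrow> 'k::field"
  assumes free: "free_partial_action X Xd h" and ab: "(a, b) \<in> orbit_rel Xd h"
  shows "conv Xd h (matrix_unit a b) g =
    (\<lambda>(x, y). if (x, y) \<in> orbit_rel Xd h \<and> x = a then g (b, y) else 0)"
proof (intro ext, clarify)
  fix x y
  obtain s0 where s0: "a \<in> Xd (- s0)" "b = h s0 a" using ab unfolding orbit_rel_iff by blast
  have support: "{s. x \<in> Xd (- s) \<and> matrix_unit a b (x, h s x) \<noteq> (0::'k)} =
      (if x = a then {s0} else {})"
    using s0 free_partial_action_unique[OF free] unfolding matrix_unit_def by auto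
  have "conv Xd h (matrix_unit a b) g (x, y) = (if (x, y) \<in> orbit_rel Xd h then
      (\<Sum>s \<in> {s. x \<in> Xd (- s) \<and> matrix_unit a b (x, h s x) \<noteq> (0::'k)}.
        matrix_unit a b (x, h s x) * g (h s x, y)) else 0)"
    unfolding conv_def by simp
  then show "conv Xd h (matrix_unit a b) g (x, y) =
      (if (x, y) \<in> orbit_rel Xd h \<and> x = a then g (b, y) else 0)"
    unfolding support using s0 by (cases "x = a") (simp_all add: matrix_unit_def)
qed

lemma conv_matrix_unit_right:
  fixes g :: "'x \<times> 'x \<Rightarrow> 'k::field"
  assumes free: "free_partial_action X Xd h" and g: "g \<in> F0 (orbit_rel Xd h)"
  shows "conv Xd h g (matrix_unit a b) =
    (\<lambda>(x, y). if (x, y) \<in> orbit_rel Xd h \<and> y = b then g (x, a) else 0)"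
proof (intro ext, clarify)
  fix x y
  let ?S = "{s. x \<in> Xd (- s) \<and> g (x, h s x) \<noteq> 0}"
  have "(\<Sum>s\<in>?S. g (x, h s x) * matrix_unit a b (h s x, y)) = (if y = b then g (x, a) else 0)"
  proof (cases "y = b \<and> g (x, a) \<noteq> 0")
    case True
    then have "(x, a) \<in> orbit_rel Xd h" using g unfolding F0_def by blast
    then obtain s1 where s1: "x \<in> Xd (- s1)" "a = h s1 x" unfolding orbit_rel_iff by blast
    have "finite ?S"
    proof (rule inj_on_finite)
      show "inj_on (\<lambda>s. (x, h s x)) ?S"
        using free_partial_action_unique[OF free] by (auto simp: inj_on_def)
      show "finite {p. g p \<noteq> 0}" using g unfolding F0_def by blast
    qed auto
    moreover have "s1 \<in> ?S" using s1 True by auto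
    moreover have "g (x, h s x) * matrix_unit a b (h s x, y) = 0" if "s \<in> ?S" "s \<noteq> s1" for s
      using that free_partial_action_unique[OF free] s1 unfolding matrix_unit_def by auto
    ultimately have "(\<Sum>s\<in>?S. g (x, h s x) * matrix_unit a b (h s x, y))
        = g (x, h s1 x) * matrix_unit a b (h s1 x, y)"
      by (subst sum.remove[of _ s1]) (auto intro: sum.neutral)
    then show ?thesis using True s1 by (simp add: matrix_unit_def)
  next
    case False
    then show ?thesis by (auto simp: matrix_unit_def intro: sum.neutral)
  qed
  then show "conv Xd h g (matrix_unit a b) (x, y) =
      (if (x, y) \<in> orbit_rel Xd h \<and> y = b then g (x, a) else 0)"
    unfolding conv_def by auto
qed

lemma conv_matrix_unit_sandwich:
  fixes f :: "'x \<times> 'x \<Rightarrow> 'k::field"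
  assumes free: "free_partial_action X Xd h" and f: "f \<in> F0 (orbit_rel Xd h)"
    and ax: "(a, x) \<in> orbit_rel Xd h" and yb: "(y, b) \<in> orbit_rel Xd h"
  shows "conv Xd h (conv Xd h (matrix_unit a x) f) (matrix_unit y b) =
    (\<lambda>p. f (x, y) * matrix_unit a b p)"
proof -
  have pa: "partial_action X Xd h" using free by (rule free_partial_action_partial_action)
  have "(a, y) \<in> orbit_rel Xd h \<and> (a, b) \<in> orbit_rel Xd h" if "f (x, y) \<noteq> 0"
  proof -
    have "(x, y) \<in> orbit_rel Xd h" using f that unfolding F0_def by blast
    then show ?thesis using orbit_rel_trans[OF pa] ax yb by blast
  qed
  moreover have F: "conv Xd h (matrix_unit a x) f \<in> F0 (orbit_rel Xd h)"
  proof -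
    have "{p. conv Xd h (matrix_unit a x) f p \<noteq> 0} \<subseteq> (\<lambda>q. (a, snd q)) ` {q. f q \<noteq> 0}"
      by (auto simp: conv_matrix_unit_left[OF free ax] split: if_splits intro: rev_image_eqI)
    moreover have "finite {q. f q \<noteq> 0}" using f unfolding F0_def by blast
    ultimately show ?thesis
      by (auto simp: F0_def conv_matrix_unit_left[OF free ax] intro: finite_subset)
  qed
  ultimately show ?thesis
    unfolding conv_matrix_unit_right[OF free F] unfolding conv_matrix_unit_left[OF free ax]
    by (auto simp: matrix_unit_def fun_eq_iff)
qed

locale free_partial_action_ideal =
  fixes X :: "'x set" and Xd :: "'g::group_add \<Rightarrow> 'x set" and h :: "'g \<Rightarrow> 'x \<Rightarrow> 'x"
    and I :: "('x \<times> 'x \<Rightarrow> 'k::field) set"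
  assumes free: "free_partial_action X Xd h"
    and ideal: "is_ideal Xd h I"
begin

abbreviation R :: "('x \<times> 'x) set" where "R \<equiv> orbit_rel Xd h"

lemma partial_action: "partial_action X Xd h"
  using free by (rule free_partial_action_partial_action)

lemma ideal_subset_F0: "I \<subseteq> F0 R"
  and ideal_zero: "(\<lambda>_. 0) \<in> I"
  and ideal_add: "f \<in> I \<Longrightarrow> g \<in> I \<Longrightarrow> (\<lambda>p. f p + g p) \<in> I"
  and ideal_smult: "f \<in> I \<Longrightarrow> (\<lambda>p. c * f p) \<in> I"
  and ideal_conv_left: "f \<in> F0 R \<Longrightarrow> g \<in> I \<Longrightarrow> conv Xd h f g \<in> I"
  and ideal_conv_right: "f \<in> F0 R \<Longrightarrow> g \<in> I \<Longrightarrow> conv Xd h g f \<in> I"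
  using ideal unfolding is_ideal_def by simp_all

lemma ideal_sum:
  assumes "finite A" "\<And>i. i \<in> A \<Longrightarrow> u i \<in> I"
  shows "(\<lambda>p. \<Sum>i\<in>A. u i p) \<in> I"
  using assms by (induction A rule: finite_induct) (simp_all add: ideal_zero ideal_add)

lemma ideal_scaled_matrix_unit:
  assumes "(\<lambda>p. c * matrix_unit a b p) \<in> I" "c \<noteq> 0"
  shows "matrix_unit a b \<in> I"
  using ideal_smult[OF assms(1), of "inverse c"] assms(2) by (simp add: field_simps)

definition ideal_points :: "'x set" where
  "ideal_points = {x. matrix_unit x x \<in> I}"

lemma ideal_points_subset: "ideal_points \<subseteq> X"
proof
  fix x assume "x \<in> ideal_points"
  then have "(matrix_unit x x :: 'x \<times> 'x \<Rightarrow> 'k) \<in> F0 R"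
    using ideal_subset_F0 unfolding ideal_points_def by blast
  then have "(x, x) \<in> R" unfolding F0_def matrix_unit_def by force
  then show "x \<in> X" using orbit_rel_fst_mem[OF partial_action] by blast
qed

lemma matrix_unit_in_ideal:
  assumes x: "x \<in> ideal_points" and xy: "(x, y) \<in> R"
  shows "matrix_unit x y \<in> I"
proof -
  have xx: "(x, x) \<in> R"
    using orbit_rel_refl[OF partial_action orbit_rel_fst_mem[OF partial_action xy]] .
  have "conv Xd h (matrix_unit x x) (matrix_unit x y) = (matrix_unit x y :: 'x \<times> 'x \<Rightarrow> 'k)"
    unfolding conv_matrix_unit_left[OF free xx] using xy
    by (auto simp: matrix_unit_def fun_eq_iff)
  moreover have "conv Xd h (matrix_unit x x) (matrix_unit x y) \<in> I"
    using ideal_conv_right[OF matrix_unit_F0[OF xy]] x unfolding ideal_points_def by blast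
  ultimately show ?thesis by simp
qed

lemma ideal_points_R_invariant: "R_invariant R ideal_points"
  unfolding R_invariant_def
proof (intro allI impI, elim conjE)
  fix z x assume zx: "(z, x) \<in> R" and z: "z \<in> ideal_points"
  have xz: "(x, z) \<in> R" using orbit_rel_sym[OF partial_action zx] .
  have "(x, x) \<in> R"
    using orbit_rel_refl[OF partial_action orbit_rel_fst_mem[OF partial_action xz]] .
  then have "conv Xd h (matrix_unit x z) (matrix_unit z x) =
      (matrix_unit x x :: 'x \<times> 'x \<Rightarrow> 'k)"
    unfolding conv_matrix_unit_left[OF free xz] by (auto simp: matrix_unit_def fun_eq_iff)
  moreover have "conv Xd h (matrix_unit x z) (matrix_unit z x) \<in> I"
    using ideal_conv_left[OF matrix_unit_F0[OF xz] matrix_unit_in_ideal[OF z zx]] .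
  ultimately show "x \<in> ideal_points" unfolding ideal_points_def by simp
qed

lemma ideal_point_of_value:
  assumes f: "f \<in> I" and c: "f (x, y) \<noteq> 0" and ax: "(a, x) \<in> R" and ya: "(y, a) \<in> R"
  shows "a \<in> ideal_points"
proof -
  have fF: "f \<in> F0 R" using f ideal_subset_F0 by blast
  have "conv Xd h (conv Xd h (matrix_unit a x) f) (matrix_unit y a) \<in> I"
    using ideal_conv_right[OF matrix_unit_F0[OF ya] ideal_conv_left[OF matrix_unit_F0[OF ax] f]] .
  then have "(\<lambda>p. f (x, y) * matrix_unit a a p) \<in> I"
    unfolding conv_matrix_unit_sandwich[OF free fF ax ya] .
  then show ?thesis using ideal_scaled_matrix_unit[OF _ c] unfolding ideal_points_def by simp
qed

lemma ideal_support_in_points: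
  assumes f: "f \<in> I" and c: "f (x, y) \<noteq> 0"
  shows "x \<in> ideal_points" "y \<in> ideal_points"
proof -
  have xy: "(x, y) \<in> R" using f c ideal_subset_F0 unfolding F0_def by blast
  have yx: "(y, x) \<in> R" using orbit_rel_sym[OF partial_action xy] .
  have xx: "(x, x) \<in> R"
    using orbit_rel_refl[OF partial_action orbit_rel_fst_mem[OF partial_action xy]] .
  have yy: "(y, y) \<in> R"
    using orbit_rel_refl[OF partial_action orbit_rel_fst_mem[OF partial_action yx]] .
  show "x \<in> ideal_points" using ideal_point_of_value[OF f c xx yx] .
  show "y \<in> ideal_points" using ideal_point_of_value[OF f c yx yy] .
qed

lemma ideal_eq_F0_points: "I = F0 ((ideal_points \<times> ideal_points) \<inter> R)"
proof
  show "I \<subseteq> F0 ((ideal_points \<times> ideal_points) \<inter> R)"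
  proof
    fix f assume f: "f \<in> I"
    then have fF: "f \<in> F0 R" using ideal_subset_F0 by blast
    have "f (x, y) = 0" if "(x, y) \<notin> (ideal_points \<times> ideal_points) \<inter> R" for x y
      using that fF ideal_support_in_points[OF f] unfolding F0_def by blast
    then show "f \<in> F0 ((ideal_points \<times> ideal_points) \<inter> R)"
      using fF unfolding F0_def by auto
  qed
  show "F0 ((ideal_points \<times> ideal_points) \<inter> R) \<subseteq> I"
  proof
    fix f :: "'x \<times> 'x \<Rightarrow> 'k"
    assume f: "f \<in> F0 ((ideal_points \<times> ideal_points) \<inter> R)"
    then have fin: "finite {p. f p \<noteq> 0}" unfolding F0_def by blast
    have "(\<lambda>q. f p * matrix_unit (fst p) (snd p) q) \<in> I" if "p \<in> {p. f p \<noteq> 0}" for p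
    proof -
      have "p \<in> (ideal_points \<times> ideal_points) \<inter> R" using f that unfolding F0_def by blast
      then have "fst p \<in> ideal_points" "(fst p, snd p) \<in> R" by auto
      then show ?thesis by (rule ideal_smult[OF matrix_unit_in_ideal])
    qed
    then have "(\<lambda>q. \<Sum>p\<in>{p. f p \<noteq> 0}. f p * matrix_unit (fst p) (snd p) q) \<in> I"
      by (rule ideal_sum[OF fin])
    then show "f \<in> I" unfolding sum_matrix_units_eq[OF fin] .
  qed
qed

end

theorem mainTheorem13:
  fixes X :: "'x set" and Xd :: "'g::group_add \<Rightarrow> 'x set" and h :: "'g \<Rightarrow> 'x \<Rightarrow> 'x"
    and I :: "('x \<times> 'x \<Rightarrow> 'k::field) set"
  assumes "free_partial_action X Xd h"
    and "is_ideal Xd h I"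
  shows "\<exists>Z. Z \<subseteq> X \<and> R_invariant (orbit_rel Xd h) Z \<and>
           I = F0 ((Z \<times> Z) \<inter> orbit_rel Xd h)"
proof -
  interpret free_partial_action_ideal X Xd h I
    using assms by unfold_locales
  show ?thesis
    using ideal_points_subset ideal_points_R_invariant ideal_eq_F0_points by blast
qed

end
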